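(* Let $\mathcal X$ be a finite alphabet and $P_0,P_1,\hat P_0,\hat P_1$ distributions on $\mathcal X$ with full support. Observations $\mathbf x\in\mathcal X^n$ are i.i.d. from $P_0$ or $P_1$, and for a threshold $\hat\gamma$ (possibly depending on $n$) the mismatched likelihood ratio test decides hypothesis $1$ iff $D(\hat T\|\hat P_0)-D(\hat T\|\hat P_1)\ge\hat\gamma$, where $\hat T$ is the type of $\mathbf x$; $\epsilon_0$ (resp. $\epsilon_1$) is the probability under $P_0^n$ (resp. $P_1^n$) of deciding $1$ (resp. $0$). Fix $\epsilon\in(0,\tfrac12)$ and define the mismatched Stein exponent $\hat E_1^{(\epsilon)}$ as the supremum, over threshold sequences $(\hat\gamma_n)$ with $\limsup_{n\to\infty}\epsilon_0\le\epsilon$, of $\liminf_{n\to\infty}-\frac1n\log\epsilon_1$. Let $\gamma^*=D(P_0\|\hat P_0)-D(P_0\|\hat P_1)$ and $\hat{\mathcal Q}_1=\{Q\in\mathcal P(\mathcal X):D(Q\|\hat P_0)-D(Q\|\hat P_1)\le\gamma^*\}$. Then $$\hat E_1^{(\epsilon)}=\min_{Q\in\hat{\mathcal Q}_1}D(Q\|P_1),$$ and this is achieved by the threshold $$\hat\gamma_n=D(P_0\|\hat P_0)-D(P_0\|\hat P_1)+\sqrt{\frac{V(P_0,\hat P_0,\hat P_1)}{n}}\,\mathsf Q^{-1}(\epsilon),$$ where $V(P_0,\hat P_0,\hat P_1)=\mathrm{Var}_{P_0}\big[\log\frac{\hat P_0(X)}{\hat P_1(X)}\big]$ with $X\sim P_0$,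 and $\mathsf Q^{-1}$ is the inverse of the Gaussian tail function $\mathsf Q(t)=\Pr[Z>t]$, $Z\sim\mathcal N(0,1)$.
   Context: $D(\cdot\|\cdot)$ is relative entropy; $\mathcal P(\mathcal X)$ is the probability simplex; the type $\hat T$ of $\mathbf x$ is its empirical distribution. *)

theory Defs
  imports "HOL-Probability.Probability"
begin

definition is_dist :: "('a::finite \<Rightarrow> real) \<Rightarrow> bool" where
  "is_dist P \<longleftrightarrow> (\<forall>x. 0 \<le> P x) \<and> (\<Sum>x\<in>UNIV. P x) = 1"

definition full_dist :: "('a::finite \<Rightarrow> real) \<Rightarrow> bool" where
  "full_dist P \<longleftrightarrow> is_dist P \<and> (\<forall>x. 0 < P x)"

definition prob_simplex :: "('a::finite \<Rightarrow> real) set" where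
  "prob_simplex = {Q. is_dist Q}"

definition KL :: "('a::finite \<Rightarrow> real) \<Rightarrow> ('a \<Rightarrow> real) \<Rightarrow> real" where
  "KL Q P = (\<Sum>x\<in>UNIV. if Q x = 0 then 0 else Q x * ln (Q x / P x))"

definition type_of :: "'a list \<Rightarrow> 'a \<Rightarrow> real" where
  "type_of xs a = real (count_list xs a) / real (length xs)"

definition decide1 :: "('a::finite \<Rightarrow> real) \<Rightarrow> ('a \<Rightarrow> real) \<Rightarrow> real \<Rightarrow> 'a list \<Rightarrow> bool" where
  "decide1 Ph0 Ph1 g xs \<longleftrightarrow> KL (type_of xs) Ph0 - KL (type_of xs) Ph1 \<ge> g"

definition seq_prob :: "('a::finite \<Rightarrow> real) \<Rightarrow> nat \<Rightarrow> ('a list \<Rightarrow> bool) \<Rightarrow> real" where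
  "seq_prob P n A = (\<Sum>xs\<in>{xs. length xs = n \<and> A xs}. prod_list (map P xs))"

definition eps0 :: "('a::finite \<Rightarrow> real) \<Rightarrow> ('a \<Rightarrow> real) \<Rightarrow> ('a \<Rightarrow> real) \<Rightarrow> nat \<Rightarrow> real \<Rightarrow> real" where
  "eps0 P0 Ph0 Ph1 n g = seq_prob P0 n (decide1 Ph0 Ph1 g)"

definition eps1 :: "('a::finite \<Rightarrow> real) \<Rightarrow> ('a \<Rightarrow> real) \<Rightarrow> ('a \<Rightarrow> real) \<Rightarrow> nat \<Rightarrow> real \<Rightarrow> real" where
  "eps1 P1 Ph0 Ph1 n g = seq_prob P1 n (\<lambda>xs. \<not> decide1 Ph0 Ph1 g xs)"

definition neglog_rate :: "nat \<Rightarrow> real \<Rightarrow> ereal" where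
  "neglog_rate n p = (if p = 0 then \<infinity> else ereal (- ln p / real n))"

definition admissible :: "('a::finite \<Rightarrow> real) \<Rightarrow> ('a \<Rightarrow> real) \<Rightarrow> ('a \<Rightarrow> real) \<Rightarrow> real \<Rightarrow> (nat \<Rightarrow> real) \<Rightarrow> bool" where
  "admissible P0 Ph0 Ph1 \<epsilon> gs \<longleftrightarrow> limsup (\<lambda>n. ereal (eps0 P0 Ph0 Ph1 n (gs n))) \<le> ereal \<epsilon>"

definition exponent1 :: "('a::finite \<Rightarrow> real) \<Rightarrow> ('a \<Rightarrow> real) \<Rightarrow> ('a \<Rightarrow> real) \<Rightarrow> (nat \<Rightarrow> real) \<Rightarrow> ereal" where
  "exponent1 P1 Ph0 Ph1 gs = liminf (\<lambda>n. neglog_rate n (eps1 P1 Ph0 Ph1 n (gs n)))"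

definition stein_exp :: "('a::finite \<Rightarrow> real) \<Rightarrow> ('a \<Rightarrow> real) \<Rightarrow> ('a \<Rightarrow> real) \<Rightarrow> ('a \<Rightarrow> real) \<Rightarrow> real \<Rightarrow> ereal" where
  "stein_exp P0 P1 Ph0 Ph1 \<epsilon> =
     (SUP gs \<in> {gs. admissible P0 Ph0 Ph1 \<epsilon> gs}. exponent1 P1 Ph0 Ph1 gs)"

definition gauss_tail :: "real \<Rightarrow> real" where
  "gauss_tail t = measure (density lborel std_normal_density) {t<..}"

definition gauss_tail_inv :: "real \<Rightarrow> real" where
  "gauss_tail_inv e = (THE t. gauss_tail t = e)"

definition mism_var :: "('a::finite \<Rightarrow> real) \<Rightarrow> ('a \<Rightarrow> real) \<Rightarrow> ('a \<Rightarrow> real) \<Rightarrow> real" where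
  "mism_var P0 Ph0 Ph1 =
     (let f = (\<lambda>x. ln (Ph0 x / Ph1 x)); m = (\<Sum>x\<in>UNIV. P0 x * f x)
      in (\<Sum>x\<in>UNIV. P0 x * (f x - m)\<^sup>2))"

end

theory Submission
  imports Defs
begin

(* Write llr = ln Ph1 - ln Ph0. The statistic D(T||Ph0) - D(T||Ph1) is the empirical mean of llr,
   so the test decides 1 iff the sum of llr over the sample is at least n times the threshold, and
   Qh1 is the half-space {Q. E_Q llr <= gamma*}. Its D(.||P1)-minimiser is an exponential tilt
   Q_opt ~ P1 exp (-theta llr), where theta >= 0 is a Lagrange multiplier (E_Q_opt llr <= gamma*,
   with equality unless theta = 0); the Gibbs variational inequality shows it is optimal.
   Achievability: for thresholds eventually below gamma* + eta, the Chernoff bound with parameter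
   theta gives eps1 <= exp (-n (D(Q_opt||P1) - theta eta)); constant thresholds gamma* + eta are
   admissible by Chebyshev's inequality, and the Gaussian threshold by the central limit theorem.
   Converse: since eps < 1 (the only use of eps < 1/2), Chebyshev's inequality forces an
   admissible threshold to be eventually at least gamma* - delta, and a change of measure to a
   full-support Q with E_Q llr < gamma* - delta and D(Q||P1) close to D(Q_opt||P1) gives
   eps1 >= exp (-n (D(Q||P1) + eta)) / 2. *)

lemma is_dist_nonneg: "is_dist P \<Longrightarrow> 0 \<le> P x"
  by (simp add: is_dist_def)

lemma full_dist_pos: "full_dist P \<Longrightarrow> 0 < P x"
  by (simp add: full_dist_def)

lemma full_dist_is_dist: "full_dist P \<Longrightarrow> is_dist P"
  by (simp add: full_dist_def)

section \<open>Expectations and probabilities on i.i.d. sequences\<close>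

definition seq_expectation :: "('a::finite \<Rightarrow> real) \<Rightarrow> nat \<Rightarrow> ('a list \<Rightarrow> real) \<Rightarrow> real" where
  "seq_expectation P n F = (\<Sum>xs\<in>{xs. length xs = n}. prod_list (map P xs) * F xs)"

lemma finite_lists_length_UNIV [simp]: "finite {xs::'a::finite list. length xs = n}"
  using finite_lists_length_eq[of "UNIV::'a set" n] by simp

lemma seq_expectation_0 [simp]: "seq_expectation P 0 F = F []"
  by (simp add: seq_expectation_def)

lemma seq_expectation_Suc:
  "seq_expectation P (Suc n) F = (\<Sum>x\<in>UNIV. P x * seq_expectation P n (\<lambda>xs. F (x # xs)))"
proof -
  have lists_Suc: "{xs. length xs = Suc n} = (\<lambda>(x, xs). x # xs) ` (UNIV \<times> {xs::'a list. length xs = n})"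
    by (auto simp: length_Suc_conv image_iff)
  have "inj_on (\<lambda>(x, xs). x # xs) (UNIV \<times> {xs::'a list. length xs = n})"
    by (auto simp: inj_on_def)
  then have "seq_expectation P (Suc n) F =
      (\<Sum>(x, xs)\<in>UNIV \<times> {xs. length xs = n}. P x * (prod_list (map P xs) * F (x # xs)))"
    unfolding seq_expectation_def lists_Suc by (simp add: sum.reindex case_prod_unfold mult.assoc)
  also have "\<dots> = (\<Sum>x\<in>UNIV. P x * seq_expectation P n (\<lambda>xs. F (x # xs)))"
    by (simp add: sum.cartesian_product[symmetric] seq_expectation_def sum_distrib_left)
  finally show ?thesis .
qed

lemma seq_expectation_add:
  "seq_expectation P n (\<lambda>xs. F xs + G xs) = seq_expectation P n F + seq_expectation P n G"
  by (simp add: seq_expectation_def distrib_left sum.distrib)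

lemma seq_expectation_cmult: "seq_expectation P n (\<lambda>xs. c * F xs) = c * seq_expectation P n F"
  by (simp add: seq_expectation_def sum_distrib_left ac_simps)

lemma seq_expectation_mono:
  assumes "\<And>x. 0 \<le> P x" and "\<And>xs. length xs = n \<Longrightarrow> F xs \<le> G xs"
  shows "seq_expectation P n F \<le> seq_expectation P n G"
  unfolding seq_expectation_def
  by (rule sum_mono) (auto intro!: mult_left_mono prod_list_nonneg assms)

lemma seq_expectation_prod_list:
  "seq_expectation P n (\<lambda>xs. prod_list (map h xs)) = (\<Sum>x\<in>UNIV. P x * h x) ^ n"
  by (induction n) (simp_all add: seq_expectation_Suc seq_expectation_cmult sum_distrib_right ac_simps)

lemma seq_expectation_const:
  assumes "is_dist P"
  shows "seq_expectation P n (\<lambda>_. c) = c"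
proof -
  have one: "prod_list (map (\<lambda>_. 1::real) xs) = 1" for xs :: "'a list"
    by (induction xs) simp_all
  have "seq_expectation P n (\<lambda>_. c) = c * seq_expectation P n (\<lambda>xs. prod_list (map (\<lambda>_. 1) xs))"
    by (simp add: seq_expectation_def sum_distrib_left one mult.commute)
  then show ?thesis
    using assms by (simp only: seq_expectation_prod_list) (simp add: is_dist_def)
qed

lemma seq_expectation_sum_list:
  assumes "is_dist P" and "(\<Sum>x\<in>UNIV. P x * c x) = 0"
  shows "seq_expectation P n (\<lambda>xs. sum_list (map c xs)) = 0"
proof (induction n)
  case (Suc n)
  then show ?case
    using assms by (simp add: seq_expectation_Suc seq_expectation_add seq_expectation_const)
qed simp

lemma seq_expectation_sum_list_sq:
  assumes P: "is_dist P" and mean: "(\<Sum>x\<in>UNIV. P x * c x) = 0"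
  shows "seq_expectation P n (\<lambda>xs. (sum_list (map c xs))\<^sup>2) = real n * (\<Sum>x\<in>UNIV. P x * (c x)\<^sup>2)"
proof (induction n)
  case (Suc n)
  have sq: "(c x + s)\<^sup>2 = (c x)\<^sup>2 + 2 * c x * s + s\<^sup>2" for x s
    by (simp add: power2_eq_square algebra_simps)
  have "seq_expectation P (Suc n) (\<lambda>xs. (sum_list (map c xs))\<^sup>2)
      = (\<Sum>x\<in>UNIV. P x * (c x)\<^sup>2 + P x * (real n * (\<Sum>x\<in>UNIV. P x * (c x)\<^sup>2)))"
    using Suc seq_expectation_sum_list[OF P mean]
    by (simp add: seq_expectation_Suc sq seq_expectation_add seq_expectation_cmult
        seq_expectation_const[OF P] distrib_left)
  also have "\<dots> = (\<Sum>x\<in>UNIV. P x * (c x)\<^sup>2) + (\<Sum>x\<in>UNIV. P x) * (real n * (\<Sum>x\<in>UNIV. P x * (c x)\<^sup>2))"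
    by (simp add: sum.distrib sum_distrib_right)
  also have "\<dots> = real (Suc n) * (\<Sum>x\<in>UNIV. P x * (c x)\<^sup>2)"
    using P by (simp add: is_dist_def algebra_simps)
  finally show ?case .
qed simp

lemma seq_prob_eq_seq_expectation: "seq_prob P n A = seq_expectation P n (\<lambda>xs. if A xs then 1 else 0)"
  unfolding seq_prob_def seq_expectation_def by (rule sum.mono_neutral_cong_left) auto

lemma seq_prob_cong:
  assumes "\<And>xs. length xs = n \<Longrightarrow> A xs = B xs"
  shows "seq_prob P n A = seq_prob P n B"
  unfolding seq_prob_def using assms by (intro sum.cong) auto

lemma seq_prob_mono:
  assumes "\<And>x. 0 \<le> P x" and "\<And>xs. length xs = n \<Longrightarrow> A xs \<Longrightarrow> B xs"
  shows "seq_prob P n A \<le> seq_prob P n B"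
  unfolding seq_prob_eq_seq_expectation by (rule seq_expectation_mono) (use assms in auto)

lemma seq_prob_nonneg:
  assumes "is_dist P"
  shows "0 \<le> seq_prob P n A"
  unfolding seq_prob_def using assms
  by (auto simp: is_dist_def intro!: sum_nonneg prod_list_nonneg)

lemma seq_prob_True:
  assumes "is_dist P"
  shows "seq_prob P n (\<lambda>_. True) = 1"
  by (simp add: seq_prob_eq_seq_expectation seq_expectation_const[OF assms])

lemma seq_prob_not:
  assumes "is_dist P"
  shows "seq_prob P n (\<lambda>xs. \<not> A xs) = 1 - seq_prob P n A"
proof -
  have "seq_expectation P n (\<lambda>xs. if \<not> A xs then 1 else 0)
      = seq_expectation P n (\<lambda>xs. 1 + (-1) * (if A xs then 1 else 0))"
    unfolding seq_expectation_def by (rule sum.cong) auto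
  then show ?thesis
    unfolding seq_prob_eq_seq_expectation
    by (simp only: seq_expectation_add seq_expectation_cmult seq_expectation_const[OF assms])
qed

lemma seq_prob_conj_ge:
  assumes "is_dist P"
  shows "1 - seq_prob P n (\<lambda>xs. \<not> A xs) - seq_prob P n (\<lambda>xs. \<not> B xs) \<le> seq_prob P n (\<lambda>xs. A xs \<and> B xs)"
proof -
  have "seq_expectation P n
          (\<lambda>xs. 1 + (-1) * (if \<not> A xs then 1 else 0) + (-1) * (if \<not> B xs then 1 else 0))
     \<le> seq_expectation P n (\<lambda>xs. if A xs \<and> B xs then 1 else 0)"
    by (rule seq_expectation_mono) (use assms in \<open>auto simp: is_dist_def\<close>)
  then show ?thesis
    unfolding seq_prob_eq_seq_expectation
    by (simp only: seq_expectation_add seq_expectation_cmult seq_expectation_const[OF assms])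
qed

lemma seq_prob_deviation_le:
  fixes h :: "'a::finite \<Rightarrow> real"
  assumes P: "is_dist P" and "0 < d" and "0 < n"
  defines "m \<equiv> \<Sum>x\<in>UNIV. P x * h x"
  shows "seq_prob P n (\<lambda>xs. real n * d \<le> \<bar>sum_list (map h xs) - real n * m\<bar>)
           \<le> (\<Sum>x\<in>UNIV. P x * (h x - m)\<^sup>2) / (real n * d\<^sup>2)"
proof -
  define c where "c x = h x - m" for x
  define a where "a = real n * d"
  have a: "0 < a" using assms by (simp add: a_def)
  have mean: "(\<Sum>x\<in>UNIV. P x * c x) = 0"
    using P by (simp add: c_def m_def right_diff_distrib sum_subtractf sum_distrib_right[symmetric] is_dist_def)
  have centre: "sum_list (map h xs) - real (length xs) * m = sum_list (map c xs)" for xs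
    by (induction xs) (simp_all add: c_def algebra_simps)
  have markov: "(if a \<le> \<bar>s\<bar> then 1 else 0) \<le> 1 / a\<^sup>2 * s\<^sup>2" for s
  proof (cases "a \<le> \<bar>s\<bar>")
    case True
    then have "a\<^sup>2 \<le> s\<^sup>2" using a by (simp add: abs_le_square_iff[symmetric])
    then show ?thesis using True a by (simp add: field_simps)
  qed simp
  have "seq_prob P n (\<lambda>xs. a \<le> \<bar>sum_list (map h xs) - real n * m\<bar>)
      \<le> seq_expectation P n (\<lambda>xs. 1 / a\<^sup>2 * (sum_list (map c xs))\<^sup>2)"
    unfolding seq_prob_eq_seq_expectation
  proof (rule seq_expectation_mono)
    fix xs :: "'a list"
    assume "length xs = n"
    then show "(if a \<le> \<bar>sum_list (map h xs) - real n * m\<bar> then 1 else 0)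
        \<le> 1 / a\<^sup>2 * (sum_list (map c xs))\<^sup>2"
      using markov[of "sum_list (map c xs)"] centre[of xs] by simp
  qed (use P in \<open>simp add: is_dist_def\<close>)
  also have "\<dots> = real n * (\<Sum>x\<in>UNIV. P x * (c x)\<^sup>2) / a\<^sup>2"
    by (simp only: seq_expectation_cmult seq_expectation_sum_list_sq[OF P mean]) simp
  also have "\<dots> = (\<Sum>x\<in>UNIV. P x * (h x - m)\<^sup>2) / (real n * d\<^sup>2)"
    using assms by (simp add: a_def c_def power2_eq_square field_simps)
  finally show ?thesis by (simp add: a_def)
qed

lemma eventually_const_over_n_le:
  assumes "0 < e"
  shows "eventually (\<lambda>n. c / real n \<le> e) sequentially"
  using order_tendstoD(2)[OF lim_const_over_n[of c] assms] by eventually_elim simp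

lemma eventually_seq_prob_deviation_le:
  fixes h :: "'a::finite \<Rightarrow> real"
  assumes P: "is_dist P" and "0 < d" and "0 < c"
  shows "eventually (\<lambda>n. seq_prob P n (\<lambda>xs. real n * d
            \<le> \<bar>sum_list (map h xs) - real n * (\<Sum>x\<in>UNIV. P x * h x)\<bar>) \<le> c) sequentially"
proof -
  define V where "V = (\<Sum>x\<in>UNIV. P x * (h x - (\<Sum>x\<in>UNIV. P x * h x))\<^sup>2)"
  from eventually_const_over_n_le[OF \<open>0 < c\<close>, of "V / d\<^sup>2"] eventually_gt_at_top[of 0]
  show ?thesis
  proof eventually_elim
    case (elim n)
    have "V / (real n * d\<^sup>2) \<le> c" using elim(1) by (simp add: ac_simps)
    then show ?case
      using seq_prob_deviation_le[OF P \<open>0 < d\<close> \<open>0 < n\<close>, of h] unfolding V_def by linarith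
  qed
qed

lemma eventually_seq_prob_upper_tail_le:
  assumes P: "is_dist P" and mean: "(\<Sum>x\<in>UNIV. P x * h x) < a" and "0 < c"
  shows "eventually (\<lambda>n. seq_prob P n (\<lambda>xs. real n * a \<le> sum_list (map h xs)) \<le> c) sequentially"
proof -
  define m where "m = (\<Sum>x\<in>UNIV. P x * h x)"
  have "0 < a - m" using mean by (simp add: m_def)
  from eventually_seq_prob_deviation_le[OF P this \<open>0 < c\<close>, of h]
  show ?thesis
  proof eventually_elim
    case (elim n)
    have "seq_prob P n (\<lambda>xs. real n * a \<le> sum_list (map h xs))
        \<le> seq_prob P n (\<lambda>xs. real n * (a - m) \<le> \<bar>sum_list (map h xs) - real n * (\<Sum>x\<in>UNIV. P x * h x)\<bar>)"
      by (rule seq_prob_mono) (use P in \<open>auto simp: is_dist_nonneg m_def algebra_simps\<close>)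
    then show ?case using elim by linarith
  qed
qed

lemma eventually_seq_prob_lower_tail_le:
  assumes P: "is_dist P" and mean: "a < (\<Sum>x\<in>UNIV. P x * h x)" and "0 < c"
  shows "eventually (\<lambda>n. seq_prob P n (\<lambda>xs. sum_list (map h xs) \<le> real n * a) \<le> c) sequentially"
proof -
  define m where "m = (\<Sum>x\<in>UNIV. P x * h x)"
  have "0 < m - a" using mean by (simp add: m_def)
  from eventually_seq_prob_deviation_le[OF P this \<open>0 < c\<close>, of h]
  show ?thesis
  proof eventually_elim
    case (elim n)
    have "seq_prob P n (\<lambda>xs. sum_list (map h xs) \<le> real n * a)
        \<le> seq_prob P n (\<lambda>xs. real n * (m - a) \<le> \<bar>sum_list (map h xs) - real n * (\<Sum>x\<in>UNIV. P x * h x)\<bar>)"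
      by (rule seq_prob_mono) (use P in \<open>auto simp: is_dist_nonneg m_def algebra_simps\<close>)
    then show ?case using elim by linarith
  qed
qed

lemma seq_prob_sum_list_less_le:
  assumes P: "is_dist P" and "0 \<le> l"
  shows "seq_prob P n (\<lambda>xs. sum_list (map h xs) < a)
           \<le> exp (l * a) * (\<Sum>x\<in>UNIV. P x * exp (- l * h x)) ^ n"
proof -
  have "seq_prob P n (\<lambda>xs. sum_list (map h xs) < a)
      \<le> seq_expectation P n (\<lambda>xs. exp (l * a) * prod_list (map (\<lambda>x. exp (- l * h x)) xs))"
    unfolding seq_prob_eq_seq_expectation
  proof (rule seq_expectation_mono)
    fix xs :: "'a list"
    have "prod_list (map (\<lambda>x. exp (- l * h x)) xs) = exp (- l * sum_list (map h xs))"
      by (induction xs) (simp_all add: exp_add[symmetric] algebra_simps)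
    moreover have "1 \<le> exp (l * a) * exp (- l * sum_list (map h xs))" if "sum_list (map h xs) < a"
      using that \<open>0 \<le> l\<close> mult_left_mono[of "sum_list (map h xs)" a l]
      by (simp add: exp_add[symmetric] algebra_simps)
    ultimately show "(if sum_list (map h xs) < a then 1 else 0)
        \<le> exp (l * a) * prod_list (map (\<lambda>x. exp (- l * h x)) xs)"
      by simp
  qed (use P in \<open>simp add: is_dist_nonneg\<close>)
  also have "\<dots> = exp (l * a) * (\<Sum>x\<in>UNIV. P x * exp (- l * h x)) ^ n"
    by (simp add: seq_expectation_cmult seq_expectation_prod_list)
  finally show ?thesis .
qed

lemma seq_prob_change_of_measure:
  assumes density: "\<And>x. P x = Q x * exp (- r x)" and Q: "\<And>x. 0 \<le> Q x"
  shows "exp (- c) * seq_prob Q n (\<lambda>xs. A xs \<and> sum_list (map r xs) \<le> c) \<le> seq_prob P n A"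
proof -
  have prod_P: "prod_list (map P xs) = prod_list (map Q xs) * exp (- sum_list (map r xs))" for xs
    by (induction xs) (simp_all add: density exp_add[symmetric])
  have "exp (- c) * seq_prob Q n (\<lambda>xs. A xs \<and> sum_list (map r xs) \<le> c)
      = seq_expectation Q n (\<lambda>xs. exp (- c) * (if A xs \<and> sum_list (map r xs) \<le> c then 1 else 0))"
    by (simp add: seq_prob_eq_seq_expectation seq_expectation_cmult)
  also have "\<dots> \<le> seq_expectation Q n (\<lambda>xs. exp (- sum_list (map r xs)) * (if A xs then 1 else 0))"
    by (rule seq_expectation_mono) (auto intro: Q)
  also have "\<dots> = seq_prob P n A"
    by (simp add: seq_prob_eq_seq_expectation seq_expectation_def prod_P mult.assoc)
  finally show ?thesis .
qed

lemma eventually_seq_prob_sum_list_less_ge: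
  assumes Q: "full_dist Q" and P: "full_dist P"
    and mean: "(\<Sum>x\<in>UNIV. Q x * h x) < a" and "0 < \<eta>"
  shows "eventually (\<lambda>n. exp (- (real n * (KL Q P + \<eta>))) / 2
           \<le> seq_prob P n (\<lambda>xs. sum_list (map h xs) < real n * a)) sequentially"
proof -
  define r where "r x = ln (Q x / P x)" for x
  have density: "P x = Q x * exp (- r x)" for x
    using full_dist_pos[OF Q, of x] full_dist_pos[OF P, of x] by (simp add: r_def exp_minus)
  have KL_r: "KL Q P = (\<Sum>x\<in>UNIV. Q x * r x)"
    unfolding KL_def r_def by (rule sum.cong) (use Q in \<open>auto simp: full_dist_pos less_imp_neq[symmetric]\<close>)
  have "eventually (\<lambda>n. seq_prob Q n (\<lambda>xs. real n * a \<le> sum_list (map h xs)) \<le> 1/4) sequentially"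
    by (rule eventually_seq_prob_upper_tail_le) (use Q mean in \<open>simp_all add: full_dist_is_dist\<close>)
  moreover have "eventually (\<lambda>n. seq_prob Q n (\<lambda>xs. real n * (KL Q P + \<eta>) \<le> sum_list (map r xs)) \<le> 1/4)
      sequentially"
    by (rule eventually_seq_prob_upper_tail_le) (use Q \<open>0 < \<eta>\<close> in \<open>simp_all add: full_dist_is_dist KL_r\<close>)
  ultimately show ?thesis
  proof eventually_elim
    case (elim n)
    have Q_dist: "is_dist Q" using Q by (rule full_dist_is_dist)
    have "seq_prob Q n (\<lambda>xs. \<not> sum_list (map h xs) < real n * a) \<le> 1/4"
      using elim(1) by (simp add: not_less)
    moreover have "seq_prob Q n (\<lambda>xs. \<not> sum_list (map r xs) \<le> real n * (KL Q P + \<eta>)) \<le> 1/4"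
      using elim(2) seq_prob_mono[of Q n "\<lambda>xs. \<not> sum_list (map r xs) \<le> real n * (KL Q P + \<eta>)"
          "\<lambda>xs. real n * (KL Q P + \<eta>) \<le> sum_list (map r xs)"] Q_dist
      by (simp add: is_dist_nonneg)
    ultimately have "1/2 \<le> seq_prob Q n (\<lambda>xs. sum_list (map h xs) < real n * a
        \<and> sum_list (map r xs) \<le> real n * (KL Q P + \<eta>))"
      using seq_prob_conj_ge[OF Q_dist, of n "\<lambda>xs. sum_list (map h xs) < real n * a"
          "\<lambda>xs. sum_list (map r xs) \<le> real n * (KL Q P + \<eta>)"] by simp
    then have "exp (- (real n * (KL Q P + \<eta>))) / 2 \<le> exp (- (real n * (KL Q P + \<eta>)))
        * seq_prob Q n (\<lambda>xs. sum_list (map h xs) < real n * a \<and> sum_list (map r xs) \<le> real n * (KL Q P + \<eta>))"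
      by simp
    also have "\<dots> \<le> seq_prob P n (\<lambda>xs. sum_list (map h xs) < real n * a)"
      by (rule seq_prob_change_of_measure[OF density]) (use Q_dist in \<open>simp add: is_dist_nonneg\<close>)
    finally show ?case .
  qed
qed

section \<open>Relative entropy\<close>

lemma KL_ge_variational:
  assumes Q: "is_dist Q" and P: "full_dist P"
  shows "(\<Sum>x\<in>UNIV. Q x * g x) - ln (\<Sum>x\<in>UNIV. P x * exp (g x)) \<le> KL Q P"
proof -
  define z where "z = (\<Sum>x\<in>UNIV. P x * exp (g x))"
  have z: "0 < z"
    unfolding z_def using P by (intro sum_pos) (auto simp: full_dist_pos)
  have pointwise: "Q x - P x * exp (g x) / z
      \<le> (if Q x = 0 then 0 else Q x * ln (Q x / P x)) - Q x * g x + Q x * ln z" for x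
  proof (cases "Q x = 0")
    case False
    then have q: "0 < Q x" using is_dist_nonneg[OF Q, of x] by simp
    have p: "0 < P x" using P by (simp add: full_dist_pos)
    define y where "y = P x * exp (g x) / (Q x * z)"
    have "0 < y" using p q z by (simp add: y_def)
    then have "ln y \<le> y - 1" by (rule ln_le_minus_one)
    moreover have "ln y = ln (P x) + g x - ln (Q x) - ln z"
      using p q z by (simp add: y_def ln_mult ln_div)
    ultimately have "Q x * (1 - y) \<le> Q x * (ln (Q x) - ln (P x) - g x + ln z)"
      using q by (intro mult_left_mono) auto
    moreover have "Q x * y = P x * exp (g x) / z" using q by (simp add: y_def)
    ultimately show ?thesis using p q False by (simp add: ln_div algebra_simps)
  qed (use P z in \<open>simp add: full_dist_pos less_imp_le\<close>)
  have "(\<Sum>x\<in>UNIV. Q x - P x * exp (g x) / z)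
      \<le> (\<Sum>x\<in>UNIV. (if Q x = 0 then 0 else Q x * ln (Q x / P x)) - Q x * g x + Q x * ln z)"
    by (rule sum_mono) (rule pointwise)
  moreover have "(\<Sum>x\<in>UNIV. Q x - P x * exp (g x) / z) = 0"
    using Q z by (simp add: is_dist_def sum_subtractf sum_divide_distrib[symmetric] z_def)
  moreover have "(\<Sum>x\<in>UNIV. (if Q x = 0 then 0 else Q x * ln (Q x / P x)) - Q x * g x + Q x * ln z)
      = KL Q P - (\<Sum>x\<in>UNIV. Q x * g x) + ln z"
    using Q by (simp add: KL_def is_dist_def sum.distrib sum_subtractf sum_distrib_right[symmetric])
  ultimately show ?thesis by (simp add: z_def)
qed

lemma KL_nonneg:
  assumes "is_dist Q" and "full_dist P"
  shows "0 \<le> KL Q P"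
  using KL_ge_variational[OF assms, of "\<lambda>_. 0"] assms(2)
  by (simp add: full_dist_def is_dist_def)

lemma KL_diff_eq_sum:
  assumes "full_dist P" and "full_dist P'" and "\<And>x. 0 \<le> Q x"
  shows "KL Q P - KL Q P' = (\<Sum>x\<in>UNIV. Q x * (ln (P' x) - ln (P x)))"
  unfolding KL_def sum_subtractf[symmetric]
proof (rule sum.cong)
  fix x
  have "0 < P x" "0 < P' x" using assms by (simp_all add: full_dist_pos)
  moreover have "Q x \<noteq> 0 \<Longrightarrow> 0 < Q x" using assms(3)[of x] by simp
  ultimately show "(if Q x = 0 then 0 else Q x * ln (Q x / P x)) - (if Q x = 0 then 0 else Q x * ln (Q x / P' x))
      = Q x * (ln (P' x) - ln (P x))"
    by (auto simp: ln_div algebra_simps)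
qed simp

lemma KL_mixture_tendsto:
  assumes Q: "full_dist Q" and P: "full_dist P" and R: "\<And>x. 0 \<le> R x"
  shows "((\<lambda>t. KL (\<lambda>x. (1 - t) * Q x + t * R x) P) \<longlongrightarrow> KL Q P) (at_right 0)"
proof -
  define G where "G t = (\<Sum>x\<in>UNIV. ((1 - t) * Q x + t * R x) * ln (((1 - t) * Q x + t * R x) / P x))"
    for t
  have "isCont G 0"
  proof -
    have "Q x / P x \<noteq> 0" for x
      using full_dist_pos[OF Q, of x] full_dist_pos[OF P, of x] by simp
    then show ?thesis unfolding G_def by (intro continuous_intros) auto
  qed
  then have "(G \<longlongrightarrow> G 0) (at_right 0)"
    unfolding isCont_def by (rule tendsto_within_subset) simp
  moreover have "G 0 = KL Q P"
    unfolding G_def KL_def using Q by (intro sum.cong) (auto simp: full_dist_pos less_imp_neq[symmetric])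
  moreover have "eventually (\<lambda>t. G t = KL (\<lambda>x. (1 - t) * Q x + t * R x) P) (at_right 0)"
  proof -
    have "eventually (\<lambda>t. 0 < t \<and> t < 1) (at_right (0::real))"
      unfolding eventually_at_right_field by (intro exI[of _ 1]) simp
    then show ?thesis
    proof eventually_elim
      case (elim t)
      then have "0 < (1 - t) * Q x + t * R x" for x
        using full_dist_pos[OF Q, of x] R[of x] by (simp add: add_pos_nonneg)
      then show ?case
        unfolding G_def KL_def by (intro sum.cong) (auto simp: less_imp_neq[symmetric])
    qed
  qed
  ultimately show ?thesis by (simp add: tendsto_cong)
qed

lemma type_of_nonneg: "0 \<le> type_of xs a"
  by (simp add: type_of_def)

lemma sum_type_of_mult:
  fixes h :: "'a::finite \<Rightarrow> real"
  shows "(\<Sum>x\<in>UNIV. type_of xs x * h x) = sum_list (map h xs) / real (length xs)"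
proof -
  have "sum_list (map h xs) = (\<Sum>x\<in>UNIV. real (count_list xs x) * h x)"
  proof (induction xs)
    case (Cons a xs)
    have "(\<Sum>x\<in>UNIV. real (count_list (a # xs) x) * h x)
        = (\<Sum>x\<in>UNIV. (if x = a then h x else 0) + real (count_list xs x) * h x)"
      by (rule sum.cong) (auto simp: algebra_simps)
    then show ?case by (simp add: sum.distrib Cons)
  qed simp
  then show ?thesis by (simp add: type_of_def sum_divide_distrib)
qed

lemma Liminf_le_of_eventually_le:
  fixes f :: "nat \<Rightarrow> 'a::complete_linorder"
  assumes "eventually (\<lambda>n. f n \<le> c) sequentially"
  shows "liminf f \<le> c"
  using Liminf_mono[OF assms] Liminf_const[of sequentially c] by simp

lemma ereal_le_of_le_plus_epsilon:
  assumes "\<And>e. 0 < e \<Longrightarrow> L \<le> ereal (K + e)"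
  shows "L \<le> ereal K"
  by (rule ereal_le_epsilon2) (use assms in simp)

lemma ereal_ge_of_ge_minus_mult:
  assumes "0 \<le> c" and "\<And>\<eta>. 0 < \<eta> \<Longrightarrow> ereal (K - c * \<eta>) \<le> L"
  shows "ereal K \<le> L"
proof (rule ereal_le_epsilon2)
  fix e :: real
  assume "0 < e"
  define \<eta> where "\<eta> = e / (c + 1)"
  have "0 < \<eta>" and "c * \<eta> \<le> e"
    using \<open>0 < e\<close> \<open>0 \<le> c\<close> by (auto simp: \<eta>_def field_simps)
  then show "ereal K \<le> L + ereal e"
    using assms(2)[of \<eta>] by (cases L) auto
qed

lemma neglog_rate_ge:
  assumes "0 \<le> p" and "p \<le> exp (- (real n * c))" and "0 < n"
  shows "ereal c \<le> neglog_rate n p"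
proof (cases "p = 0")
  case False
  then have "ln p \<le> - (real n * c)" using assms ln_mono[OF assms(2)] by simp
  then have "c \<le> - ln p / real n" using \<open>0 < n\<close> by (simp add: field_simps)
  then show ?thesis using False by (simp add: neglog_rate_def)
qed (simp add: neglog_rate_def)

lemma neglog_rate_le:
  assumes "exp (- (real n * c)) / 2 \<le> p" and "0 < n"
  shows "neglog_rate n p \<le> ereal (c + ln 2 / real n)"
proof -
  have "0 < p" using assms(1) exp_gt_zero[of "- (real n * c)"] by linarith
  then have "- (real n * c) - ln 2 \<le> ln p"
    using assms(1) ln_mono[of "exp (- (real n * c)) / 2" p] by (simp add: ln_div)
  then have "- ln p / real n \<le> c + ln 2 / real n" using \<open>0 < n\<close> by (simp add: field_simps)
  then show ?thesis using \<open>0 < p\<close> by (simp add: neglog_rate_def)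
qed

section \<open>The standard normal distribution and the central limit theorem\<close>

interpretation std_normal: real_distribution std_normal_distribution
  by (rule real_dist_normal_dist)

lemma isCont_std_normal_cdf: "isCont (cdf std_normal_distribution) t"
proof -
  have "emeasure std_normal_distribution {t}
      = (\<integral>\<^sup>+ y. ennreal (std_normal_density y) * indicator {t} y \<partial>lborel)"
    by (rule emeasure_density) auto
  also have "\<dots> = 0"
    using AE_lborel_singleton[of t] by (subst nn_integral_0_iff_AE) (auto elim!: eventually_mono)
  finally show ?thesis
    by (simp add: std_normal.isCont_cdf measure_def)
qed

lemma gauss_tail_eq_1_minus_cdf: "gauss_tail t = 1 - cdf std_normal_distribution t"
proof -
  have "{t<..} = space std_normal_distribution - {..t}" by auto
  then show ?thesis
    using std_normal.prob_compl[of "{..t}"] by (simp add: gauss_tail_def cdf_def)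
qed

lemma std_normal_cdf_strict_mono:
  assumes "a < b"
  shows "cdf std_normal_distribution a < cdf std_normal_distribution b"
proof -
  have "emeasure std_normal_distribution {a<..b} \<noteq> 0"
  proof
    assume "emeasure std_normal_distribution {a<..b} = 0"
    then have "(\<integral>\<^sup>+ y. ennreal (std_normal_density y) * indicator {a<..b} y \<partial>lborel) = 0"
      by (subst (asm) emeasure_density) auto
    then have "AE y in lborel. ennreal (std_normal_density y) * indicator {a<..b} y = 0"
      by (subst (asm) nn_integral_0_iff_AE) auto
    then have "AE y in lborel. y \<notin> {a<..b}"
      by (rule eventually_mono) (auto simp: indicator_def less_imp_neq[OF normal_density_pos[of 1 0], symmetric])
    then have "emeasure lborel {a<..b} = 0"
      by (subst (asm) AE_iff_measurable[of "{a<..b}"]) auto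
    then show False using assms by simp
  qed
  then have "0 < measure std_normal_distribution {a<..b}"
    by (simp add: std_normal.emeasure_eq_measure zero_less_measure_iff)
  then show ?thesis using std_normal.cdf_diff_eq[OF assms] by simp
qed

lemma gauss_tail_gauss_tail_inv:
  assumes "0 < e" and "e < 1"
  shows "gauss_tail (gauss_tail_inv e) = e"
proof -
  let ?\<Phi> = "cdf std_normal_distribution"
  have "eventually (\<lambda>x. ?\<Phi> x < 1 - e) at_bot"
    using order_tendstoD(2)[OF std_normal.cdf_lim_at_bot, of "1 - e"] assms by simp
  then obtain a where a: "?\<Phi> a < 1 - e"
    by (meson eventually_happens' trivial_limit_at_bot_linorder)
  have "eventually (\<lambda>x. 1 - e < ?\<Phi> x) at_top"
    using order_tendstoD(1)[OF std_normal.cdf_lim_at_top_prob, of "1 - e"] assms by simp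
  then obtain b where b: "1 - e < ?\<Phi> b"
    by (meson eventually_happens' trivial_limit_at_top_linorder)
  have "a \<le> b"
    using a b std_normal.cdf_nondecreasing[of b a] by (cases "a \<le> b") auto
  moreover have "continuous_on {a..b} ?\<Phi>"
    using isCont_std_normal_cdf by (simp add: continuous_at_imp_continuous_on)
  ultimately obtain t where t: "?\<Phi> t = 1 - e"
    using IVT'[of ?\<Phi> a "1 - e" b] a b by auto
  have "\<exists>!t. gauss_tail t = e"
  proof
    show "gauss_tail t = e" using t by (simp add: gauss_tail_eq_1_minus_cdf)
    fix s
    assume "gauss_tail s = e"
    then have "?\<Phi> s = ?\<Phi> t" using t by (simp add: gauss_tail_eq_1_minus_cdf)
    then show "s = t"
      using std_normal_cdf_strict_mono[of s t] std_normal_cdf_strict_mono[of t s]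
      by (cases s t rule: linorder_cases) auto
  qed
  then show ?thesis unfolding gauss_tail_inv_def by (rule theI')
qed

lemma pmf_embed_pmf_is_dist:
  assumes "is_dist P"
  shows "pmf (embed_pmf P) x = P x"
proof (rule pmf_embed_pmf)
  show "0 \<le> P x" for x using assms by (rule is_dist_nonneg)
  have "(\<integral>\<^sup>+x. ennreal (P x) \<partial>count_space UNIV) = (\<Sum>x\<in>UNIV. ennreal (P x))"
    by (rule nn_integral_count_space_finite) simp
  also have "\<dots> = ennreal (\<Sum>x\<in>UNIV. P x)"
    using assms by (intro sum_ennreal) (simp add: is_dist_nonneg)
  finally show "(\<integral>\<^sup>+x. ennreal (P x) \<partial>count_space UNIV) = 1"
    using assms by (simp add: is_dist_def)
qed

definition iid_space :: "('a::finite \<Rightarrow> real) \<Rightarrow> (nat \<Rightarrow> 'a) measure" where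
  "iid_space P = PiM UNIV (\<lambda>_. measure_pmf (embed_pmf P))"

lemma prob_space_iid_space: "prob_space (iid_space P)"
  unfolding iid_space_def by (rule prob_space_PiM) (rule measure_pmf.prob_space_axioms)

lemma space_iid_space: "space (iid_space P) = UNIV"
  by (simp add: iid_space_def space_PiM PiE_UNIV_domain)

lemma cylinder_eq_prod_emb:
  "{\<omega>. \<forall>i<length xs. \<omega> i = xs ! i}
     = prod_emb UNIV (\<lambda>_. measure_pmf p) {..<length xs} (Pi\<^sub>E {..<length xs} (\<lambda>i. {xs ! i}))"
  by (rule set_eqI) (simp add: prod_emb_iff restrict_PiE_iff Pi_iff Ball_def)

lemma cylinder_in_sets_iid_space: "{\<omega>. \<forall>i<length xs. \<omega> i = xs ! i} \<in> sets (iid_space P)"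
  unfolding cylinder_eq_prod_emb[where p = "embed_pmf P"] iid_space_def by (auto intro!: sets_PiM_I)

lemma measure_iid_space_cylinder:
  assumes P: "is_dist P"
  shows "measure (iid_space P) {\<omega>. \<forall>i<length xs. \<omega> i = xs ! i} = prod_list (map P xs)"
proof -
  have "emeasure (iid_space P) {\<omega>. \<forall>i<length xs. \<omega> i = xs ! i}
      = (\<Prod>i<length xs. emeasure (measure_pmf (embed_pmf P)) {xs ! i})"
    unfolding cylinder_eq_prod_emb[where p = "embed_pmf P"] iid_space_def
    by (rule emeasure_PiM_emb) (auto intro: measure_pmf.prob_space_axioms)
  also have "\<dots> = (\<Prod>i<length xs. ennreal (P (xs ! i)))"
    using P by (simp add: emeasure_pmf_single pmf_embed_pmf_is_dist)
  also have "\<dots> = ennreal (\<Prod>i<length xs. P (xs ! i))"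
    using P by (intro prod_ennreal) (simp add: is_dist_nonneg)
  finally have "measure (iid_space P) {\<omega>. \<forall>i<length xs. \<omega> i = xs ! i} = (\<Prod>i<length xs. P (xs ! i))"
    using P by (simp add: measure_def prod_nonneg is_dist_nonneg)
  also have "\<dots> = prod_list (map P xs)"
    by (induction xs) (simp_all add: prod.lessThan_Suc_shift del: prod.lessThan_Suc)
  finally show ?thesis .
qed

lemma measure_iid_space_eq_seq_prob:
  assumes P: "is_dist P"
  shows "measure (iid_space P) {\<omega>. A (map \<omega> [0..<n])} = seq_prob P n A"
proof -
  interpret prob_space "iid_space P" by (rule prob_space_iid_space)
  define C where "C xs = {\<omega>. \<forall>i<length xs. \<omega> i = xs ! i}" for xs :: "'a list"
  define L where "L = {xs. length xs = n \<and> A xs}"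
  have events: "{\<omega>. A (map \<omega> [0..<n])} = (\<Union>xs\<in>L. C xs)"
  proof safe
    fix \<omega> :: "nat \<Rightarrow> 'a"
    assume "A (map \<omega> [0..<n])"
    then show "\<omega> \<in> (\<Union>xs\<in>L. C xs)"
      by (intro UN_I[of "map \<omega> [0..<n]"]) (auto simp: L_def C_def)
  next
    fix \<omega> xs
    assume "xs \<in> L" "\<omega> \<in> C xs"
    then have "map \<omega> [0..<n] = xs" by (auto simp: L_def C_def intro: nth_equalityI)
    with \<open>xs \<in> L\<close> show "A (map \<omega> [0..<n])" by (simp add: L_def)
  qed
  have disjoint: "disjoint_family_on C L"
    unfolding disjoint_family_on_def
  proof (intro ballI impI)
    fix xs ys
    assume "xs \<in> L" "ys \<in> L" "xs \<noteq> ys"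
    then have "length xs = length ys" by (simp add: L_def)
    then obtain i where "i < length xs" "xs ! i \<noteq> ys ! i"
      using \<open>xs \<noteq> ys\<close> nth_equalityI by blast
    then show "C xs \<inter> C ys = {}" using \<open>length xs = length ys\<close> by (auto simp: C_def)
  qed
  have sets_C: "C xs \<in> sets (iid_space P)" for xs
    unfolding C_def by (rule cylinder_in_sets_iid_space)
  have "finite L"
    using finite_lists_length_UNIV[of n] by (rule rev_finite_subset) (auto simp: L_def)
  then have "measure (iid_space P) {\<omega>. A (map \<omega> [0..<n])} = (\<Sum>xs\<in>L. measure (iid_space P) (C xs))"
    unfolding events using disjoint sets_C by (intro measure_finite_Union) (auto simp: emeasure_finite)
  also have "\<dots> = (\<Sum>xs\<in>L. prod_list (map P xs))"
    unfolding C_def by (intro sum.cong refl measure_iid_space_cylinder[OF P])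
  finally show ?thesis by (simp add: seq_prob_def L_def)
qed

lemma indep_vars_iid_space:
  "prob_space.indep_vars (iid_space P) (\<lambda>_. measure_pmf (embed_pmf P)) (\<lambda>i \<omega>. \<omega> i) UNIV"
proof -
  interpret prob_space "iid_space P" by (rule prob_space_iid_space)
  have "distr (iid_space P) (measure_pmf (embed_pmf P)) (\<lambda>\<omega>. \<omega> i) = measure_pmf (embed_pmf P)" for i
    unfolding iid_space_def by (rule distr_PiM_component) (auto intro: measure_pmf.prob_space_axioms)
  then show ?thesis
    by (subst indep_vars_iff_distr_eq_PiM) (simp_all add: iid_space_def restrict_UNIV)
qed

lemma integral_iid_space_coordinate:
  assumes P: "is_dist P"
  shows "integrable (iid_space P) (\<lambda>\<omega>. g (\<omega> i))"
    and "(\<integral>\<omega>. g (\<omega> i) \<partial>iid_space P) = (\<Sum>x\<in>UNIV. P x * g x)"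
proof -
  have coord: "(\<lambda>\<omega>. \<omega> i) \<in> measurable (iid_space P) (measure_pmf (embed_pmf P))"
    unfolding iid_space_def by (rule measurable_component_singleton) simp
  have distr: "distr (iid_space P) (measure_pmf (embed_pmf P)) (\<lambda>\<omega>. \<omega> i) = measure_pmf (embed_pmf P)"
    unfolding iid_space_def by (rule distr_PiM_component) (auto intro: measure_pmf.prob_space_axioms)
  have "integrable (distr (iid_space P) (measure_pmf (embed_pmf P)) (\<lambda>\<omega>. \<omega> i)) g"
    unfolding distr by (rule integrable_measure_pmf_finite) simp
  then show "integrable (iid_space P) (\<lambda>\<omega>. g (\<omega> i))"
    by (subst (asm) integrable_distr_eq[OF coord]) simp_all
  have "(\<integral>\<omega>. g (\<omega> i) \<partial>iid_space P) = (\<integral>x. g x \<partial>distr (iid_space P) (measure_pmf (embed_pmf P)) (\<lambda>\<omega>. \<omega> i))"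
    by (rule integral_distr[OF coord, symmetric]) simp
  also have "\<dots> = (\<Sum>x\<in>UNIV. P x * g x)"
    unfolding distr using P by (simp add: integral_measure_pmf_real[of UNIV] pmf_embed_pmf_is_dist mult.commute)
  finally show "(\<integral>\<omega>. g (\<omega> i) \<partial>iid_space P) = (\<Sum>x\<in>UNIV. P x * g x)" .
qed

lemma distr_iid_space_coordinate:
  "distr (iid_space P) borel (\<lambda>\<omega>. g (\<omega> i)) = distr (measure_pmf (embed_pmf P)) borel g"
proof -
  have coord: "(\<lambda>\<omega>. \<omega> i) \<in> measurable (iid_space P) (measure_pmf (embed_pmf P))"
    unfolding iid_space_def by (rule measurable_component_singleton) simp
  have "distr (iid_space P) borel (\<lambda>\<omega>. g (\<omega> i))
      = distr (distr (iid_space P) (measure_pmf (embed_pmf P)) (\<lambda>\<omega>. \<omega> i)) borel g"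
    by (rule distr_distr[OF _ coord, symmetric, unfolded comp_def]) simp
  also have "distr (iid_space P) (measure_pmf (embed_pmf P)) (\<lambda>\<omega>. \<omega> i) = measure_pmf (embed_pmf P)"
    unfolding iid_space_def by (rule distr_PiM_component) (auto intro: measure_pmf.prob_space_axioms)
  finally show ?thesis .
qed

lemma seq_prob_central_limit:
  fixes h :: "'a::finite \<Rightarrow> real"
  assumes P: "is_dist P"
  defines "m \<equiv> \<Sum>x\<in>UNIV. P x * h x"
  defines "V \<equiv> \<Sum>x\<in>UNIV. P x * (h x - m)\<^sup>2"
  assumes V: "0 < V"
  shows "(\<lambda>n. seq_prob P n (\<lambda>xs. (sum_list (map h xs) - real n * m) / sqrt (real n * V) \<le> y))
           \<longlonglongrightarrow> cdf std_normal_distribution y"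
proof -
  interpret prob_space "iid_space P" by (rule prob_space_iid_space)
  define S where "S n \<omega> = (\<Sum>i<n. h (\<omega> i) - m) / sqrt (real n * (sqrt V)\<^sup>2)" for n \<omega>
  have "indep_vars (\<lambda>_. borel) (\<lambda>i \<omega>. h (\<omega> i)) UNIV"
    by (rule indep_vars_compose2[OF indep_vars_iid_space]) simp
  moreover have "expectation (\<lambda>\<omega>. h (\<omega> i)) = m" for i
    using integral_iid_space_coordinate(2)[OF P, of h] by (simp add: m_def)
  moreover have "variance (\<lambda>\<omega>. h (\<omega> i)) = (sqrt V)\<^sup>2" for i
    using integral_iid_space_coordinate(2)[OF P, of "\<lambda>x. (h x - m)\<^sup>2"] calculation(2) V
    by (simp add: V_def)
  ultimately have "weak_conv_m (\<lambda>n. distr (iid_space P) borel (S n)) std_normal_distribution"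
    unfolding S_def using V integral_iid_space_coordinate(1)[OF P] distr_iid_space_coordinate
    by (intro central_limit_theorem) auto
  then have "(\<lambda>n. cdf (distr (iid_space P) borel (S n)) y) \<longlonglongrightarrow> cdf std_normal_distribution y"
    using isCont_std_normal_cdf unfolding weak_conv_m_def weak_conv_def by blast
  moreover have "cdf (distr (iid_space P) borel (S n)) y
      = seq_prob P n (\<lambda>xs. (sum_list (map h xs) - real n * m) / sqrt (real n * V) \<le> y)" for n
  proof -
    have "S n \<in> borel_measurable (iid_space P)"
      unfolding S_def iid_space_def by measurable
    moreover have "S n \<omega> = (sum_list (map h (map \<omega> [0..<n])) - real n * m) / sqrt (real n * V)" for \<omega>
    proof -
      have "(\<Sum>i<n. h (\<omega> i) - m) = sum_list (map h (map \<omega> [0..<n])) - real n * m"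
        by (induction n) (simp_all add: algebra_simps)
      then show ?thesis using V by (simp add: S_def)
    qed
    ultimately have "cdf (distr (iid_space P) borel (S n)) y
        = measure (iid_space P) {\<omega>. (sum_list (map h (map \<omega> [0..<n])) - real n * m) / sqrt (real n * V) \<le> y}"
      unfolding cdf_def by (simp add: measure_distr space_iid_space vimage_def)
    also have "\<dots> = seq_prob P n (\<lambda>xs. (sum_list (map h xs) - real n * m) / sqrt (real n * V) \<le> y)"
      by (rule measure_iid_space_eq_seq_prob[OF P,
            where A = "\<lambda>xs. (sum_list (map h xs) - real n * m) / sqrt (real n * V) \<le> y"])
    finally show ?thesis .
  qed
  ultimately show ?thesis by simp
qed

locale mismatched_test =
  fixes P0 P1 Ph0 Ph1 :: "'a::finite \<Rightarrow> real"
  assumes full_P0: "full_dist P0" and full_P1: "full_dist P1"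
    and full_Ph0: "full_dist Ph0" and full_Ph1: "full_dist Ph1"
begin

definition llr :: "'a \<Rightarrow> real" where
  "llr x = ln (Ph1 x) - ln (Ph0 x)"

definition \<gamma> :: real where
  "\<gamma> = (\<Sum>x\<in>UNIV. P0 x * llr x)"

lemma P0_dist: "is_dist P0"
  using full_P0 by (rule full_dist_is_dist)

lemma P1_dist: "is_dist P1"
  using full_P1 by (rule full_dist_is_dist)

lemma KL_diff_eq_llr_mean:
  assumes "\<And>x. 0 \<le> Q x"
  shows "KL Q Ph0 - KL Q Ph1 = (\<Sum>x\<in>UNIV. Q x * llr x)"
  using KL_diff_eq_sum[OF full_Ph0 full_Ph1 assms] by (simp add: llr_def)

lemma \<gamma>_eq: "\<gamma> = KL P0 Ph0 - KL P0 Ph1"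
  using KL_diff_eq_llr_mean[of P0] P0_dist by (simp add: \<gamma>_def is_dist_nonneg)

lemma decide1_iff:
  assumes "length xs = n" and "0 < n"
  shows "decide1 Ph0 Ph1 g xs \<longleftrightarrow> real n * g \<le> sum_list (map llr xs)"
proof -
  have "KL (type_of xs) Ph0 - KL (type_of xs) Ph1 = sum_list (map llr xs) / real n"
    using KL_diff_eq_llr_mean[of "type_of xs"] sum_type_of_mult[of xs llr] assms
    by (simp add: type_of_nonneg)
  then show ?thesis
    using assms by (simp add: decide1_def pos_le_divide_eq mult.commute)
qed

lemma eps0_eq:
  assumes "0 < n"
  shows "eps0 P0 Ph0 Ph1 n g = seq_prob P0 n (\<lambda>xs. real n * g \<le> sum_list (map llr xs))"
  unfolding eps0_def by (rule seq_prob_cong) (simp add: decide1_iff assms)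

lemma eps1_eq:
  assumes "0 < n"
  shows "eps1 P1 Ph0 Ph1 n g = seq_prob P1 n (\<lambda>xs. sum_list (map llr xs) < real n * g)"
  unfolding eps1_def by (rule seq_prob_cong) (auto simp: decide1_iff assms not_le)

lemma llr_below_mean:
  assumes "\<exists>x. llr x \<noteq> \<gamma>"
  shows "\<exists>x. llr x < \<gamma>"
proof (rule ccontr)
  assume "\<not> (\<exists>x. llr x < \<gamma>)"
  then have nonneg: "0 \<le> P0 x * (llr x - \<gamma>)" for x
    using P0_dist by (simp add: is_dist_nonneg not_less)
  have "(\<Sum>x\<in>UNIV. P0 x * (llr x - \<gamma>)) = 0"
    using P0_dist by (simp add: \<gamma>_def right_diff_distrib sum_subtractf sum_distrib_right[symmetric] is_dist_def)
  then have zero: "P0 x * (llr x - \<gamma>) = 0" for x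
    using nonneg by (simp add: sum_nonneg_eq_0_iff)
  have "llr x = \<gamma>" for x
    using zero[of x] full_dist_pos[OF full_P0, of x] by simp
  then show False using assms by simp
qed

section \<open>Exponential tilting\<close>

definition tilt_norm :: "real \<Rightarrow> real" where
  "tilt_norm \<theta> = (\<Sum>x\<in>UNIV. P1 x * exp (- \<theta> * llr x))"

definition tilt :: "real \<Rightarrow> 'a \<Rightarrow> real" where
  "tilt \<theta> x = P1 x * exp (- \<theta> * llr x) / tilt_norm \<theta>"

definition tilt_mean :: "real \<Rightarrow> real" where
  "tilt_mean \<theta> = (\<Sum>x\<in>UNIV. tilt \<theta> x * llr x)"

lemma tilt_norm_pos: "0 < tilt_norm \<theta>"
  unfolding tilt_norm_def using full_P1 by (intro sum_pos) (auto simp: full_dist_pos)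

lemma tilt_full_dist: "full_dist (tilt \<theta>)"
proof -
  have "0 < tilt \<theta> x" for x
    using tilt_norm_pos[of \<theta>] full_dist_pos[OF full_P1, of x] by (simp add: tilt_def)
  moreover have "(\<Sum>x\<in>UNIV. tilt \<theta> x) = 1"
    using tilt_norm_pos[of \<theta>] by (simp add: tilt_def tilt_norm_def sum_divide_distrib[symmetric])
  ultimately show ?thesis by (simp add: full_dist_def is_dist_def less_imp_le)
qed

lemma tilt_0: "tilt 0 = P1"
  using P1_dist by (simp add: fun_eq_iff tilt_def tilt_norm_def is_dist_def)

lemma KL_tilt: "KL (tilt \<theta>) P1 = - \<theta> * tilt_mean \<theta> - ln (tilt_norm \<theta>)"
proof -
  have "KL (tilt \<theta>) P1 = (\<Sum>x\<in>UNIV. tilt \<theta> x * (- \<theta> * llr x) - tilt \<theta> x * ln (tilt_norm \<theta>))"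
    unfolding KL_def
  proof (rule sum.cong)
    fix x
    have "tilt \<theta> x / P1 x = exp (- \<theta> * llr x) / tilt_norm \<theta>"
      using full_dist_pos[OF full_P1, of x] by (simp add: tilt_def)
    then have ln_eq: "ln (tilt \<theta> x / P1 x) = - \<theta> * llr x - ln (tilt_norm \<theta>)"
      using tilt_norm_pos[of \<theta>] by (simp add: ln_div)
    have "tilt \<theta> x \<noteq> 0"
      using full_dist_pos[OF tilt_full_dist, of \<theta> x] by simp
    then show "(if tilt \<theta> x = 0 then 0 else tilt \<theta> x * ln (tilt \<theta> x / P1 x))
        = tilt \<theta> x * (- \<theta> * llr x) - tilt \<theta> x * ln (tilt_norm \<theta>)"
      by (simp only: if_not_P ln_eq) (simp add: algebra_simps)
  qed simp
  also have "\<dots> = - \<theta> * tilt_mean \<theta> - ln (tilt_norm \<theta>) * (\<Sum>x\<in>UNIV. tilt \<theta> x)"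
    by (simp add: sum_subtractf tilt_mean_def sum_distrib_left sum_distrib_right algebra_simps)
  finally show ?thesis
    using tilt_full_dist[of \<theta>] by (simp add: full_dist_def is_dist_def)
qed

lemma KL_ge_tilt_bound:
  assumes "is_dist Q"
  shows "- \<theta> * (\<Sum>x\<in>UNIV. Q x * llr x) - ln (tilt_norm \<theta>) \<le> KL Q P1"
  using KL_ge_variational[OF assms full_P1, of "\<lambda>x. - \<theta> * llr x"]
  by (simp add: tilt_norm_def sum_distrib_left algebra_simps)

lemma continuous_on_tilt_mean: "continuous_on A tilt_mean"
proof -
  have "(\<Sum>x\<in>UNIV. P1 x * exp (- (\<theta> * llr x))) \<noteq> 0" for \<theta>
    using tilt_norm_pos[of \<theta>] by (simp add: tilt_norm_def)
  then show ?thesis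
    unfolding tilt_mean_def tilt_def tilt_norm_def by (intro continuous_intros) auto
qed

lemma tilt_mean_le:
  assumes min: "\<And>x. llr x0 \<le> llr x" and "0 < \<theta>"
  shows "tilt_mean \<theta> \<le> llr x0 + 1 / (\<theta> * P1 x0)"
proof -
  have P1_pos: "0 < P1 x" for x using full_P1 by (rule full_dist_pos)
  have bound: "exp (- \<theta> * llr x) * (llr x - llr x0) \<le> exp (- \<theta> * llr x0) / \<theta>" for x
  proof -
    have "\<theta> * (llr x - llr x0) \<le> exp (\<theta> * (llr x - llr x0))"
      using exp_ge_add_one_self[of "\<theta> * (llr x - llr x0)"] by linarith
    then have "exp (- \<theta> * llr x) * (llr x - llr x0)
        \<le> exp (- \<theta> * llr x) * (exp (\<theta> * (llr x - llr x0)) / \<theta>)"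
      using \<open>0 < \<theta>\<close> by (intro mult_left_mono) (simp_all add: field_simps)
    also have "\<dots> = exp (- \<theta> * llr x0) / \<theta>"
      by (simp add: mult_exp_exp algebra_simps)
    finally show ?thesis .
  qed
  have "tilt_mean \<theta> - llr x0 = (\<Sum>x\<in>UNIV. tilt \<theta> x * (llr x - llr x0))"
    using tilt_full_dist[of \<theta>]
    by (simp add: tilt_mean_def right_diff_distrib sum_subtractf sum_distrib_right[symmetric]
        full_dist_def is_dist_def)
  also have "\<dots> = (\<Sum>x\<in>UNIV. P1 x * (exp (- \<theta> * llr x) * (llr x - llr x0))) / tilt_norm \<theta>"
    by (simp add: tilt_def sum_divide_distrib mult.assoc)
  also have "\<dots> \<le> (\<Sum>x\<in>UNIV. P1 x * (exp (- \<theta> * llr x0) / \<theta>)) / tilt_norm \<theta>"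
    using tilt_norm_pos[of \<theta>] P1_pos bound
    by (intro divide_right_mono sum_mono mult_left_mono) (auto simp: less_imp_le)
  also have "\<dots> = exp (- \<theta> * llr x0) / \<theta> / tilt_norm \<theta>"
    by (simp only: sum_distrib_right[symmetric]) (use P1_dist in \<open>simp add: is_dist_def\<close>)
  also have "\<dots> \<le> exp (- \<theta> * llr x0) / \<theta> / (P1 x0 * exp (- \<theta> * llr x0))"
  proof -
    have "P1 x0 * exp (- \<theta> * llr x0) \<le> tilt_norm \<theta>"
      unfolding tilt_norm_def
      by (rule member_le_sum[where f = "\<lambda>x. P1 x * exp (- \<theta> * llr x)"])
        (auto simp: less_imp_le P1_pos)
    then show ?thesis
      using P1_pos[of x0] \<open>0 < \<theta>\<close> tilt_norm_pos[of \<theta>] by (intro divide_left_mono) auto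
  qed
  also have "\<dots> = 1 / (\<theta> * P1 x0)"
    using P1_pos[of x0] by simp
  finally show ?thesis by simp
qed

text \<open>The optimal tilt parameter is the Lagrange multiplier of the constraint
  \<open>\<Sum>x. Q x * llr x \<le> \<gamma>\<close>; complementary slackness makes the bound \<open>KL_ge_tilt_bound\<close> tight.\<close>

lemma exists_optimal_tilt: "\<exists>\<theta>\<ge>0. tilt_mean \<theta> \<le> \<gamma> \<and> \<theta> * (tilt_mean \<theta> - \<gamma>) = 0"
proof (cases "tilt_mean 0 \<le> \<gamma>")
  case True
  then show ?thesis by (intro exI[of _ 0]) simp
next
  case False
  have "\<exists>x. llr x \<noteq> \<gamma>"
  proof (rule ccontr)
    assume "\<not> (\<exists>x. llr x \<noteq> \<gamma>)"
    then have "tilt_mean 0 = \<gamma>"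
      using P1_dist by (simp add: tilt_mean_def tilt_0 sum_distrib_right[symmetric] is_dist_def)
    with False show False by simp
  qed
  then obtain x1 where x1: "llr x1 < \<gamma>" using llr_below_mean by blast
  have "Min (range llr) \<in> range llr" by (rule Min_in) auto
  then obtain x0 where "llr x0 = Min (range llr)" by (metis imageE)
  then have min: "llr x0 \<le> llr x" for x by simp
  define L where "L = 2 / ((\<gamma> - llr x0) * P1 x0)"
  have gap: "0 < \<gamma> - llr x0" using min[of x1] x1 by simp
  have "0 < L" using gap full_dist_pos[OF full_P1, of x0] by (simp add: L_def)
  have "tilt_mean L \<le> llr x0 + 1 / (L * P1 x0)"
    by (rule tilt_mean_le[OF min \<open>0 < L\<close>])
  also have "\<dots> = llr x0 + (\<gamma> - llr x0) / 2"
    using gap full_dist_pos[OF full_P1, of x0] by (simp add: L_def)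
  finally have "tilt_mean L \<le> \<gamma>" using gap by (simp add: field_simps)
  then obtain \<theta> where "0 \<le> \<theta>" "\<theta> \<le> L" "tilt_mean \<theta> = \<gamma>"
    using IVT2'[of tilt_mean L \<gamma> 0] \<open>0 < L\<close> False continuous_on_tilt_mean by auto
  then show ?thesis by auto
qed

definition opt_tilt :: real where
  "opt_tilt = (SOME \<theta>. 0 \<le> \<theta> \<and> tilt_mean \<theta> \<le> \<gamma> \<and> \<theta> * (tilt_mean \<theta> - \<gamma>) = 0)"

definition Q_opt :: "'a \<Rightarrow> real" where
  "Q_opt = tilt opt_tilt"

lemma opt_tilt:
  "0 \<le> opt_tilt" "tilt_mean opt_tilt \<le> \<gamma>" "opt_tilt * (tilt_mean opt_tilt - \<gamma>) = 0"
  using someI_ex[OF exists_optimal_tilt] unfolding opt_tilt_def[symmetric] by auto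

lemma Q_opt_full_dist: "full_dist Q_opt"
  by (simp add: Q_opt_def tilt_full_dist)

lemma Q_opt_mean_le: "(\<Sum>x\<in>UNIV. Q_opt x * llr x) \<le> \<gamma>"
  using opt_tilt(2) by (simp add: Q_opt_def tilt_mean_def)

lemma KL_Q_opt: "KL Q_opt P1 = - opt_tilt * \<gamma> - ln (tilt_norm opt_tilt)"
  using KL_tilt[of opt_tilt] opt_tilt(3) by (simp add: Q_opt_def algebra_simps)

lemma KL_Q_opt_le:
  assumes "is_dist Q" and "(\<Sum>x\<in>UNIV. Q x * llr x) \<le> \<gamma>"
  shows "KL Q_opt P1 \<le> KL Q P1"
  using KL_ge_tilt_bound[OF assms(1), of opt_tilt] mult_left_mono[OF assms(2) opt_tilt(1)]
  by (simp add: KL_Q_opt)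

section \<open>Achievability\<close>

lemma neglog_rate_eps1_ge:
  assumes "0 < n"
  shows "ereal (KL Q_opt P1 - opt_tilt * (g - \<gamma>)) \<le> neglog_rate n (eps1 P1 Ph0 Ph1 n g)"
proof (rule neglog_rate_ge)
  show "0 \<le> eps1 P1 Ph0 Ph1 n g"
    unfolding eps1_def by (rule seq_prob_nonneg[OF P1_dist])
  have "eps1 P1 Ph0 Ph1 n g \<le> exp (opt_tilt * (real n * g)) * tilt_norm opt_tilt ^ n"
    unfolding eps1_eq[OF assms] tilt_norm_def by (rule seq_prob_sum_list_less_le[OF P1_dist opt_tilt(1)])
  also have "tilt_norm opt_tilt ^ n = exp (real n * ln (tilt_norm opt_tilt))"
    using tilt_norm_pos by (simp add: exp_of_nat_mult)
  also have "exp (opt_tilt * (real n * g)) * \<dots> = exp (- (real n * (KL Q_opt P1 - opt_tilt * (g - \<gamma>))))"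
    by (simp add: KL_Q_opt mult_exp_exp algebra_simps)
  finally show "eps1 P1 Ph0 Ph1 n g \<le> exp (- (real n * (KL Q_opt P1 - opt_tilt * (g - \<gamma>))))" .
qed (rule assms)

lemma exponent1_ge:
  assumes "eventually (\<lambda>n. gs n \<le> \<gamma> + \<eta>) sequentially"
  shows "ereal (KL Q_opt P1 - opt_tilt * \<eta>) \<le> exponent1 P1 Ph0 Ph1 gs"
  unfolding exponent1_def
proof (rule Liminf_bounded)
  from assms eventually_gt_at_top[of 0]
  show "eventually (\<lambda>n. ereal (KL Q_opt P1 - opt_tilt * \<eta>) \<le> neglog_rate n (eps1 P1 Ph0 Ph1 n (gs n)))
      sequentially"
  proof eventually_elim
    case (elim n)
    then have "KL Q_opt P1 - opt_tilt * \<eta> \<le> KL Q_opt P1 - opt_tilt * (gs n - \<gamma>)"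
      using mult_left_mono[of "gs n - \<gamma>" \<eta> opt_tilt] opt_tilt(1) by simp
    then show ?case
      using neglog_rate_eps1_ge[OF elim(2), of "gs n"] by (meson ereal_less_eq(3) order_trans)
  qed
qed

lemma admissible_const:
  assumes "0 < \<eta>" and "0 < \<epsilon>"
  shows "admissible P0 Ph0 Ph1 \<epsilon> (\<lambda>_. \<gamma> + \<eta>)"
  unfolding admissible_def
proof (rule Limsup_bounded)
  have "(\<Sum>x\<in>UNIV. P0 x * llr x) < \<gamma> + \<eta>"
    using assms by (simp add: \<gamma>_def)
  from eventually_seq_prob_upper_tail_le[OF P0_dist this \<open>0 < \<epsilon>\<close>] eventually_gt_at_top[of 0]
  show "eventually (\<lambda>n. ereal (eps0 P0 Ph0 Ph1 n (\<gamma> + \<eta>)) \<le> ereal \<epsilon>) sequentially"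
    by eventually_elim (simp add: eps0_eq)
qed

section \<open>Converse\<close>

lemma admissible_eventually_ge:
  assumes adm: "admissible P0 Ph0 Ph1 \<epsilon> gs" and "\<epsilon> < 1" and "0 < \<delta>"
  shows "eventually (\<lambda>n. \<gamma> - \<delta> \<le> gs n) sequentially"
proof -
  define c where "c = (1 + \<epsilon>) / 2"
  have c: "\<epsilon> < c" "c < 1" using \<open>\<epsilon> < 1\<close> by (auto simp: c_def)
  have "eventually (\<lambda>n. ereal (eps0 P0 Ph0 Ph1 n (gs n)) < ereal c) sequentially"
    by (rule Limsup_lessD) (use adm c in \<open>auto simp: admissible_def intro: le_less_trans\<close>)
  moreover have "eventually (\<lambda>n. seq_prob P0 n (\<lambda>xs. sum_list (map llr xs) \<le> real n * (\<gamma> - \<delta>)) \<le> 1 - c)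
      sequentially"
    by (rule eventually_seq_prob_lower_tail_le[OF P0_dist]) (use \<open>0 < \<delta>\<close> c in \<open>simp_all add: \<gamma>_def\<close>)
  moreover note eventually_gt_at_top[of 0]
  ultimately show ?thesis
  proof eventually_elim
    case (elim n)
    show ?case
    proof (rule ccontr)
      assume "\<not> \<gamma> - \<delta> \<le> gs n"
      then have "real n * gs n \<le> real n * (\<gamma> - \<delta>)" by (intro mult_left_mono) auto
      then have "seq_prob P0 n (\<lambda>xs. \<not> sum_list (map llr xs) \<le> real n * (\<gamma> - \<delta>))
          \<le> eps0 P0 Ph0 Ph1 n (gs n)"
        unfolding eps0_eq[OF elim(3)] by (intro seq_prob_mono) (auto simp: is_dist_nonneg[OF P0_dist])
      then show False using elim(1,2) seq_prob_not[OF P0_dist] by simp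
    qed
  qed
qed

lemma exists_full_dist_near_Q_opt:
  assumes "\<exists>x. llr x \<noteq> \<gamma>" and "0 < \<zeta>"
  shows "\<exists>Q. full_dist Q \<and> (\<Sum>x\<in>UNIV. Q x * llr x) < \<gamma> \<and> KL Q P1 < KL Q_opt P1 + \<zeta>"
proof -
  obtain x0 where x0: "llr x0 < \<gamma>" using llr_below_mean[OF assms(1)] by blast
  define Qt where "Qt t = (\<lambda>x. (1 - t) * Q_opt x + t * (if x = x0 then 1 else 0))" for t
  have "((\<lambda>t. KL (Qt t) P1) \<longlongrightarrow> KL Q_opt P1) (at_right 0)"
    unfolding Qt_def by (rule KL_mixture_tendsto[OF Q_opt_full_dist full_P1]) simp
  moreover have "KL Q_opt P1 < KL Q_opt P1 + \<zeta>" using \<open>0 < \<zeta>\<close> by simp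
  ultimately have "eventually (\<lambda>t. KL (Qt t) P1 < KL Q_opt P1 + \<zeta>) (at_right 0)"
    by (rule order_tendstoD(2))
  then obtain b where "0 < b" and b: "\<And>t. 0 < t \<Longrightarrow> t < b \<Longrightarrow> KL (Qt t) P1 < KL Q_opt P1 + \<zeta>"
    unfolding eventually_at_right_field by blast
  define t where "t = min (b / 2) (1 / 2)"
  have t: "0 < t" "t < 1" "t < b" using \<open>0 < b\<close> by (auto simp: t_def)
  have "full_dist (Qt t)"
  proof -
    have "0 < Qt t x" for x
      using t full_dist_pos[OF Q_opt_full_dist, of x] by (simp add: Qt_def add_pos_nonneg)
    moreover have "(\<Sum>x\<in>UNIV. Qt t x) = 1"
      using Q_opt_full_dist
      by (simp add: Qt_def sum.distrib sum_distrib_left[symmetric] full_dist_def is_dist_def)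
    ultimately show ?thesis by (simp add: full_dist_def is_dist_def less_imp_le)
  qed
  moreover have "(\<Sum>x\<in>UNIV. Qt t x * llr x) < \<gamma>"
  proof -
    have delta: "(if x = x0 then 1 else 0) * llr x = (if x = x0 then llr x0 else 0)" for x
      by simp
    have "(\<Sum>x\<in>UNIV. Qt t x * llr x) = (1 - t) * (\<Sum>x\<in>UNIV. Q_opt x * llr x) + t * llr x0"
      by (simp add: Qt_def distrib_right sum.distrib sum_distrib_left[symmetric] mult.assoc delta)
    also have "\<dots> < \<gamma>"
    proof -
      have "(1 - t) * (\<Sum>x\<in>UNIV. Q_opt x * llr x) \<le> (1 - t) * \<gamma>"
        using t(2) by (intro mult_left_mono Q_opt_mean_le) simp
      moreover have "t * llr x0 < t * \<gamma>"
        using x0 t(1) by simp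
      moreover have "(1 - t) * \<gamma> + t * \<gamma> = \<gamma>"
        by (simp add: algebra_simps)
      ultimately show ?thesis by linarith
    qed
    finally show ?thesis .
  qed
  moreover have "KL (Qt t) P1 < KL Q_opt P1 + \<zeta>"
    using b t by simp
  ultimately show ?thesis by blast
qed

lemma exponent1_le_of_llr_const:
  assumes adm: "admissible P0 Ph0 Ph1 \<epsilon> gs" and "\<epsilon> < 1" and const: "\<And>x. llr x = \<gamma>"
  shows "exponent1 P1 Ph0 Ph1 gs \<le> ereal (KL Q_opt P1)"
proof -
  have sum_llr: "sum_list (map llr xs) = real (length xs) * \<gamma>" for xs
    by (induction xs) (simp_all add: const algebra_simps)
  have "eventually (\<lambda>n. ereal (eps0 P0 Ph0 Ph1 n (gs n)) < ereal 1) sequentially"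
    by (rule Limsup_lessD) (use adm \<open>\<epsilon> < 1\<close> in \<open>auto simp: admissible_def intro: le_less_trans\<close>)
  with eventually_gt_at_top[of 0]
  have "eventually (\<lambda>n. neglog_rate n (eps1 P1 Ph0 Ph1 n (gs n)) \<le> ereal (KL Q_opt P1)) sequentially"
  proof eventually_elim
    case (elim n)
    have "\<gamma> < gs n"
    proof (rule ccontr)
      assume "\<not> \<gamma> < gs n"
      then have "real n * gs n \<le> real n * \<gamma>" by (intro mult_left_mono) auto
      then have "eps0 P0 Ph0 Ph1 n (gs n) = seq_prob P0 n (\<lambda>_. True)"
        unfolding eps0_eq[OF elim(1)] by (intro seq_prob_cong) (simp add: sum_llr)
      then show False using elim(2) seq_prob_True[OF P0_dist] by simp
    qed
    then have "eps1 P1 Ph0 Ph1 n (gs n) = seq_prob P1 n (\<lambda>_. True)"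
      unfolding eps1_eq[OF elim(1)] using elim(1) by (intro seq_prob_cong) (simp add: sum_llr)
    then show ?case
      using KL_nonneg[OF full_dist_is_dist[OF Q_opt_full_dist] full_P1] seq_prob_True[OF P1_dist]
      by (simp add: neglog_rate_def)
  qed
  then show ?thesis
    unfolding exponent1_def by (rule Liminf_le_of_eventually_le)
qed

lemma exponent1_le:
  assumes adm: "admissible P0 Ph0 Ph1 \<epsilon> gs" and "\<epsilon> < 1"
  shows "exponent1 P1 Ph0 Ph1 gs \<le> ereal (KL Q_opt P1)"
proof (cases "\<forall>x. llr x = \<gamma>")
  case True
  then show ?thesis using exponent1_le_of_llr_const[OF assms] by blast
next
  case False
  show ?thesis
  proof (rule ereal_le_of_le_plus_epsilon)
    fix e :: real
    assume "0 < e"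
    obtain Q where Q: "full_dist Q" "(\<Sum>x\<in>UNIV. Q x * llr x) < \<gamma>" "KL Q P1 < KL Q_opt P1 + e / 2"
      using exists_full_dist_near_Q_opt[of "e / 2"] False \<open>0 < e\<close> by auto
    define \<delta> where "\<delta> = (\<gamma> - (\<Sum>x\<in>UNIV. Q x * llr x)) / 2"
    have "0 < \<delta>" and Q_mean: "(\<Sum>x\<in>UNIV. Q x * llr x) < \<gamma> - \<delta>"
      using Q(2) by (simp_all add: \<delta>_def field_simps)
    have "0 < e / 4" using \<open>0 < e\<close> by simp
    from admissible_eventually_ge[OF adm \<open>\<epsilon> < 1\<close> \<open>0 < \<delta>\<close>]
      eventually_seq_prob_sum_list_less_ge[OF Q(1) full_P1 Q_mean \<open>0 < e / 4\<close>]
      eventually_const_over_n_le[OF \<open>0 < e / 4\<close>, of "ln 2"] eventually_gt_at_top[of 0]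
    have "eventually (\<lambda>n. neglog_rate n (eps1 P1 Ph0 Ph1 n (gs n)) \<le> ereal (KL Q_opt P1 + e)) sequentially"
    proof eventually_elim
      case (elim n)
      have "real n * (\<gamma> - \<delta>) \<le> real n * gs n" using elim(1) by (intro mult_left_mono) auto
      then have "seq_prob P1 n (\<lambda>xs. sum_list (map llr xs) < real n * (\<gamma> - \<delta>)) \<le> eps1 P1 Ph0 Ph1 n (gs n)"
        unfolding eps1_eq[OF elim(4)] by (intro seq_prob_mono) (auto simp: is_dist_nonneg[OF P1_dist])
      then have "neglog_rate n (eps1 P1 Ph0 Ph1 n (gs n)) \<le> ereal (KL Q P1 + e / 4 + ln 2 / real n)"
        using elim(2,4) by (intro neglog_rate_le) auto
      moreover have "KL Q P1 + e / 4 + ln 2 / real n \<le> KL Q_opt P1 + e"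
        using elim(3) Q(3) by linarith
      ultimately show ?case by (meson ereal_less_eq(3) order_trans)
    qed
    then show "exponent1 P1 Ph0 Ph1 gs \<le> ereal (KL Q_opt P1 + e)"
      unfolding exponent1_def by (rule Liminf_le_of_eventually_le)
  qed
qed

lemma stein_exp_eq:
  assumes "0 < \<epsilon>" and "\<epsilon> < 1"
  shows "stein_exp P0 P1 Ph0 Ph1 \<epsilon> = ereal (KL Q_opt P1)"
proof (rule antisym)
  show "stein_exp P0 P1 Ph0 Ph1 \<epsilon> \<le> ereal (KL Q_opt P1)"
    unfolding stein_exp_def by (rule SUP_least) (use exponent1_le \<open>\<epsilon> < 1\<close> in auto)
  show "ereal (KL Q_opt P1) \<le> stein_exp P0 P1 Ph0 Ph1 \<epsilon>"
  proof (rule ereal_ge_of_ge_minus_mult[OF opt_tilt(1)])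
    fix \<eta> :: real
    assume "0 < \<eta>"
    have "ereal (KL Q_opt P1 - opt_tilt * \<eta>) \<le> exponent1 P1 Ph0 Ph1 (\<lambda>_. \<gamma> + \<eta>)"
      by (rule exponent1_ge) simp
    also have "\<dots> \<le> stein_exp P0 P1 Ph0 Ph1 \<epsilon>"
      unfolding stein_exp_def by (rule SUP_upper) (simp add: admissible_const \<open>0 < \<eta>\<close> assms(1))
    finally show "ereal (KL Q_opt P1 - opt_tilt * \<eta>) \<le> stein_exp P0 P1 Ph0 Ph1 \<epsilon>" .
  qed
qed

section \<open>The second-order threshold\<close>

lemma mism_var_eq: "mism_var P0 Ph0 Ph1 = (\<Sum>x\<in>UNIV. P0 x * (llr x - \<gamma>)\<^sup>2)"
proof -
  have "ln (Ph0 x / Ph1 x) = - llr x" for x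
    using full_dist_pos[OF full_Ph0, of x] full_dist_pos[OF full_Ph1, of x] by (simp add: llr_def ln_div)
  moreover have "(\<Sum>x\<in>UNIV. P0 x * - llr x) = - \<gamma>"
    by (simp add: \<gamma>_def sum_negf)
  ultimately show ?thesis
    unfolding mism_var_def Let_def by (simp add: power2_eq_square algebra_simps)
qed

lemma eps0_gaussian_threshold_le:
  assumes V: "0 < mism_var P0 Ph0 Ph1" and "0 < n" and "s < t"
  shows "eps0 P0 Ph0 Ph1 n (\<gamma> + sqrt (mism_var P0 Ph0 Ph1 / real n) * t)
           \<le> 1 - seq_prob P0 n (\<lambda>xs. (sum_list (map llr xs) - real n * \<gamma>)
                                      / sqrt (real n * mism_var P0 Ph0 Ph1) \<le> s)"
proof -
  let ?V = "mism_var P0 Ph0 Ph1"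
  have sqrt_eq: "real n * sqrt (?V / real n) = sqrt (real n * ?V)"
    using \<open>0 < n\<close> V by (simp add: real_sqrt_divide real_sqrt_mult field_simps)
  have "0 < sqrt (real n * ?V)" using \<open>0 < n\<close> V by simp
  have "eps0 P0 Ph0 Ph1 n (\<gamma> + sqrt (?V / real n) * t)
      \<le> seq_prob P0 n (\<lambda>xs. \<not> (sum_list (map llr xs) - real n * \<gamma>) / sqrt (real n * ?V) \<le> s)"
    unfolding eps0_eq[OF \<open>0 < n\<close>]
  proof (rule seq_prob_mono)
    fix xs :: "'a list"
    assume "real n * (\<gamma> + sqrt (?V / real n) * t) \<le> sum_list (map llr xs)"
    then have "sqrt (real n * ?V) * t \<le> sum_list (map llr xs) - real n * \<gamma>"
      using sqrt_eq by (simp add: algebra_simps)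
    then have "t \<le> (sum_list (map llr xs) - real n * \<gamma>) / sqrt (real n * ?V)"
      using \<open>0 < sqrt (real n * ?V)\<close> by (simp add: pos_le_divide_eq mult.commute)
    then show "\<not> (sum_list (map llr xs) - real n * \<gamma>) / sqrt (real n * ?V) \<le> s"
      using \<open>s < t\<close> by simp
  qed (rule is_dist_nonneg[OF P0_dist])
  then show ?thesis by (simp add: seq_prob_not[OF P0_dist])
qed

lemma admissible_gaussian_threshold:
  assumes V: "0 < mism_var P0 Ph0 Ph1" and "0 < \<epsilon>" and "\<epsilon> < 1"
  shows "admissible P0 Ph0 Ph1 \<epsilon> (\<lambda>n. \<gamma> + sqrt (mism_var P0 Ph0 Ph1 / real n) * gauss_tail_inv \<epsilon>)"
  unfolding admissible_def
proof (rule ereal_le_of_le_plus_epsilon)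
  fix e :: real
  assume "0 < e"
  let ?\<Phi> = "cdf std_normal_distribution" and ?V = "mism_var P0 Ph0 Ph1"
  define t where "t = gauss_tail_inv \<epsilon>"
  have \<Phi>_t: "1 - ?\<Phi> t = \<epsilon>"
    using gauss_tail_gauss_tail_inv[OF assms(2,3)] by (simp add: t_def gauss_tail_eq_1_minus_cdf)
  obtain d where "0 < d" and d: "\<And>s. \<bar>s - t\<bar> < d \<Longrightarrow> \<bar>?\<Phi> s - ?\<Phi> t\<bar> < e / 2"
    using isCont_std_normal_cdf[of t] \<open>0 < e\<close> unfolding continuous_at_eps_delta dist_real_def
    by (meson half_gt_zero)
  have "\<bar>?\<Phi> (t - d / 2) - ?\<Phi> t\<bar> < e / 2"
    using \<open>0 < d\<close> by (intro d) simp
  then have "?\<Phi> t - e / 2 < ?\<Phi> (t - d / 2)"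
    unfolding abs_less_iff by linarith
  moreover have "(\<lambda>n. seq_prob P0 n (\<lambda>xs. (sum_list (map llr xs) - real n * \<gamma>) / sqrt (real n * ?V) \<le> t - d / 2))
      \<longlonglongrightarrow> ?\<Phi> (t - d / 2)"
    using seq_prob_central_limit[OF P0_dist, where h = llr and y = "t - d / 2"] V
    by (simp add: mism_var_eq \<gamma>_def)
  ultimately have clt: "eventually (\<lambda>n. ?\<Phi> t - e / 2
      < seq_prob P0 n (\<lambda>xs. (sum_list (map llr xs) - real n * \<gamma>) / sqrt (real n * ?V) \<le> t - d / 2))
      sequentially"
    by (intro order_tendstoD(1))
  have "t - d / 2 < t" using \<open>0 < d\<close> by simp
  from clt eventually_gt_at_top[of 0]
  have "eventually (\<lambda>n. eps0 P0 Ph0 Ph1 n (\<gamma> + sqrt (?V / real n) * t) \<le> \<epsilon> + e) sequentially"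
  proof eventually_elim
    case (elim n)
    then show ?case
      using eps0_gaussian_threshold_le[OF V elim(2) \<open>t - d / 2 < t\<close>] \<Phi>_t \<open>0 < e\<close> by linarith
  qed
  then show "limsup (\<lambda>n. ereal (eps0 P0 Ph0 Ph1 n (\<gamma> + sqrt (?V / real n) * gauss_tail_inv \<epsilon>)))
      \<le> ereal (\<epsilon> + e)"
    unfolding t_def by (intro Limsup_bounded) simp
qed

lemma exponent1_gaussian_threshold:
  assumes "0 < mism_var P0 Ph0 Ph1" and "0 < \<epsilon>" and "\<epsilon> < 1"
  shows "exponent1 P1 Ph0 Ph1 (\<lambda>n. \<gamma> + sqrt (mism_var P0 Ph0 Ph1 / real n) * gauss_tail_inv \<epsilon>)
           = ereal (KL Q_opt P1)"
proof (rule antisym)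
  show "exponent1 P1 Ph0 Ph1 (\<lambda>n. \<gamma> + sqrt (mism_var P0 Ph0 Ph1 / real n) * gauss_tail_inv \<epsilon>)
      \<le> ereal (KL Q_opt P1)"
    by (rule exponent1_le[OF admissible_gaussian_threshold[OF assms] \<open>\<epsilon> < 1\<close>])
  have "(\<lambda>n. sqrt (mism_var P0 Ph0 Ph1 / real n)) \<longlonglongrightarrow> 0"
    using tendsto_real_sqrt[OF lim_const_over_n[of "mism_var P0 Ph0 Ph1"]] by simp
  then have lim: "(\<lambda>n. sqrt (mism_var P0 Ph0 Ph1 / real n) * gauss_tail_inv \<epsilon>) \<longlonglongrightarrow> 0"
    by (rule tendsto_mult_left_zero)
  show "ereal (KL Q_opt P1)
      \<le> exponent1 P1 Ph0 Ph1 (\<lambda>n. \<gamma> + sqrt (mism_var P0 Ph0 Ph1 / real n) * gauss_tail_inv \<epsilon>)"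
  proof (rule ereal_ge_of_ge_minus_mult[OF opt_tilt(1)])
    fix \<eta> :: real
    assume "0 < \<eta>"
    from order_tendstoD(2)[OF lim this]
    have "eventually (\<lambda>n. \<gamma> + sqrt (mism_var P0 Ph0 Ph1 / real n) * gauss_tail_inv \<epsilon> \<le> \<gamma> + \<eta>) sequentially"
      by eventually_elim simp
    then show "ereal (KL Q_opt P1 - opt_tilt * \<eta>)
        \<le> exponent1 P1 Ph0 Ph1 (\<lambda>n. \<gamma> + sqrt (mism_var P0 Ph0 Ph1 / real n) * gauss_tail_inv \<epsilon>)"
      by (rule exponent1_ge)
  qed
qed

end

theorem theorem2:
  fixes P0 P1 Ph0 Ph1 :: "'a::finite \<Rightarrow> real" and \<epsilon> :: real
  assumes "full_dist P0" and "full_dist P1" and "full_dist Ph0" and "full_dist Ph1"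
    and "0 < \<epsilon>" and "\<epsilon> < 1/2"
  defines "\<gamma>s \<equiv> KL P0 Ph0 - KL P0 Ph1"
  defines "Qh1 \<equiv> {Q \<in> prob_simplex. KL Q Ph0 - KL Q Ph1 \<le> \<gamma>s}"
  shows "\<exists>Qm \<in> Qh1. (\<forall>Q \<in> Qh1. KL Qm P1 \<le> KL Q P1)
           \<and> stein_exp P0 P1 Ph0 Ph1 \<epsilon> = ereal (KL Qm P1)
           \<and> (mism_var P0 Ph0 Ph1 > 0 \<longrightarrow>
               (let gs = (\<lambda>n. \<gamma>s + sqrt (mism_var P0 Ph0 Ph1 / real n) * gauss_tail_inv \<epsilon>)
                in admissible P0 Ph0 Ph1 \<epsilon> gs \<and> exponent1 P1 Ph0 Ph1 gs = ereal (KL Qm P1)))"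
proof -
  interpret mismatched_test P0 P1 Ph0 Ph1
    using assms(1-4) by unfold_locales
  have "\<epsilon> < 1" using assms(6) by simp
  have Qh1_eq: "Qh1 = {Q. is_dist Q \<and> (\<Sum>x\<in>UNIV. Q x * llr x) \<le> \<gamma>}"
    by (auto simp: Qh1_def \<gamma>s_def prob_simplex_def \<gamma>_eq[symmetric] KL_diff_eq_llr_mean is_dist_nonneg)
  show ?thesis
    unfolding Qh1_eq \<gamma>s_def \<gamma>_eq[symmetric] Let_def
  proof (intro bexI conjI ballI impI)
    show "Q_opt \<in> {Q. is_dist Q \<and> (\<Sum>x\<in>UNIV. Q x * llr x) \<le> \<gamma>}"
      using Q_opt_full_dist Q_opt_mean_le by (simp add: full_dist_is_dist)
    show "KL Q_opt P1 \<le> KL Q P1" if "Q \<in> {Q. is_dist Q \<and> (\<Sum>x\<in>UNIV. Q x * llr x) \<le> \<gamma>}" for Q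
      using that KL_Q_opt_le by blast
    show "stein_exp P0 P1 Ph0 Ph1 \<epsilon> = ereal (KL Q_opt P1)"
      by (rule stein_exp_eq[OF assms(5) \<open>\<epsilon> < 1\<close>])
    show "admissible P0 Ph0 Ph1 \<epsilon> (\<lambda>n. \<gamma> + sqrt (mism_var P0 Ph0 Ph1 / real n) * gauss_tail_inv \<epsilon>)"
      and "exponent1 P1 Ph0 Ph1 (\<lambda>n. \<gamma> + sqrt (mism_var P0 Ph0 Ph1 / real n) * gauss_tail_inv \<epsilon>)
        = ereal (KL Q_opt P1)"
      if "0 < mism_var P0 Ph0 Ph1"
      using admissible_gaussian_threshold exponent1_gaussian_threshold that assms(5) \<open>\<epsilon> < 1\<close>
      by blast+
  qed
qed

end
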